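(* Let $n\ge 2$, let $\Omega_0\subset\mathbb{R}^n$ be a ball and let $V\in C^1(\mathbb{R}^n,\mathbb{R}^n)$. Suppose that the point $x=0$ is the center of mass of the domain $\Omega_t^V$ for all $t$ sufficiently close to $0$, and that the function $v(x)=\langle V(x),x\rangle$ restricted to $\partial\Omega_0$ is a first order spherical harmonic (i.e. $v(x)=\langle b,x\rangle$ on $\partial\Omega_0$ for some $b\in\mathbb{R}^n$). Then $v=0$ on $\partial\Omega_0$.
   Context: $T_t^V$ denotes the flow of the ODE $\dot x=V(x)$ and $\Omega_t^V=T_t^V(\Omega_0)$. The center of mass of a bounded domain $D$ is $\frac{1}{|D|}\int_D x\,dx$. *)

theory Defs
  imports "HOL-Analysis.Analysis"
begin

definition center_of_mass :: "'a::euclidean_space set \<Rightarrow> 'a" where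
  "center_of_mass D = (1 / measure lebesgue D) *\<^sub>R integral D (\<lambda>x. x)"

definition C1_field :: "('a::euclidean_space \<Rightarrow> 'a) \<Rightarrow> bool" where
  "C1_field V \<longleftrightarrow> (\<exists>D :: 'a \<Rightarrow> 'a \<Rightarrow>\<^sub>L 'a.
      (\<forall>x. (V has_derivative blinfun_apply (D x)) (at x)) \<and> continuous_on UNIV D)"

definition is_flow_on :: "('a::euclidean_space \<Rightarrow> 'a) \<Rightarrow> real \<Rightarrow> 'a set \<Rightarrow> (real \<Rightarrow> 'a \<Rightarrow> 'a) \<Rightarrow> bool" where
  "is_flow_on V e S phi \<longleftrightarrow>
     (\<forall>x\<in>S. phi 0 x = x \<and>
        (\<forall>t\<in>{-e<..<e}. ((\<lambda>s. phi s x) has_vector_derivative V (phi t x)) (at t)))"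

end

theory Submission
  imports Defs
begin

(*
  After translating, the ball is B(0, r): its centre of mass is its centre. Put h(x) = x \<bullet> (V x - b);
  it vanishes on the sphere, so |h x| = O(r - |x|). To first order the flow moves x to x + t V x,
  hence |phi t x - t b|^2 = |x|^2 + 2 t h x + O(t^2) \<le> r^2 + O(t^2), and on the sphere of radius
  r - t^2 the map phi t - t b points outward up to O(t^2); Brouwer's fixed point theorem turns the
  latter into a covering statement. So the image of the ball lies between B(t b, r - K t^2) and
  B(t b, r + K t^2). A set squeezed between two concentric balls of radii R1 \<le> R2 has its centre of
  mass within n (R2 - R1) of their centre, whence t |b| = O(t^2) and b = 0.
*)

section \<open>Centres of mass\<close>

lemma integral_point_reflection_odd_eq_0:
  fixes f :: "'a::euclidean_space \<Rightarrow> 'b::banach"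
  assumes "bounded S"
    and S: "\<And>x. x \<in> S \<Longrightarrow> 2 *\<^sub>R a - x \<in> S"
    and f: "\<And>x. x \<in> S \<Longrightarrow> f (2 *\<^sub>R a - x) = - f x"
  shows "integral S f = 0"
proof (cases "f integrable_on S")
  case False
  then show ?thesis by (simp add: not_integrable_integral)
next
  case True
  define g where "g x = (if a + x \<in> S then f (a + x) else 0)" for x
  have g_odd: "g (- x) = - g x" for x
  proof -
    have "a + - x = 2 *\<^sub>R a - (a + x)" "a + x = 2 *\<^sub>R a - (a + - x)"
      by (simp_all add: scaleR_2)
    then show ?thesis
      unfolding g_def using S f by (smt (verit) minus_zero)
  qed
  have "bounded ((\<lambda>x. x - a) ` S)"
    using \<open>bounded S\<close> by (rule bounded_translation_minus)
  then obtain u where "(\<lambda>x. x - a) ` S \<subseteq> cbox (- u) u"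
    using bounded_subset_cbox_symmetric by metis
  then have sub: "S \<subseteq> cbox (- u + a) (u + a)"
    by (fastforce simp: mem_box algebra_simps)
  have "(f has_integral integral S f) S"
    using True by (rule integrable_integral)
  then have "((\<lambda>x. if x \<in> S then f x else 0) has_integral integral S f) (cbox (- u + a) (u + a))"
    by (simp only: has_integral_restrict[OF sub])
  then have "(g has_integral integral S f) (cbox (- u) u)"
    unfolding g_def using has_integral_shift_cbox_iff[of "\<lambda>x. if x \<in> S then f x else 0" a _ "- u" u]
    by (simp add: o_def)
  moreover have "(g has_integral - integral S f) (cbox (- u) u)"
    using calculation has_integral_reflect[of g "integral S f" u "- u"]
    by (simp add: g_odd has_integral_neg_iff)
  ultimately have "integral S f = - integral S f"
    by (rule has_integral_unique)
  then show ?thesis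
    by (simp add: eq_neg_iff_add_eq_0 flip: scaleR_2)
qed

lemma integral_ball_minus_center: "integral (ball a R) (\<lambda>x. x - a) = 0"
proof (rule integral_point_reflection_odd_eq_0)
  have "a - (2 *\<^sub>R a - x) = - (a - x)" for x
    by (simp add: scaleR_2)
  then have "dist a (2 *\<^sub>R a - x) = dist a x" for x
    by (metis dist_norm norm_minus_cancel)
  then show "x \<in> ball a R \<Longrightarrow> 2 *\<^sub>R a - x \<in> ball a R" for x
    by simp
qed (simp_all add: scaleR_2)

lemma integrable_on_id:
  fixes S :: "'a::euclidean_space set"
  assumes "bounded S" "S \<in> sets lebesgue"
  shows "(\<lambda>x. x) integrable_on S"
proof -
  obtain B where B: "\<And>x. x \<in> S \<Longrightarrow> norm x \<le> B"
    using \<open>bounded S\<close> bounded_iff by blast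
  show ?thesis
  proof (rule measurable_bounded_by_integrable_imp_integrable[OF _ _ B \<open>S \<in> sets lebesgue\<close>])
    show "(\<lambda>x. x) \<in> borel_measurable (lebesgue_on S)"
      using continuous_imp_measurable_on_sets_lebesgue[OF continuous_on_id \<open>S \<in> sets lebesgue\<close>] .
    show "(\<lambda>x. B) integrable_on S"
      using assms by (intro integrable_on_const bounded_set_imp_lmeasurable)
  qed
qed

lemma integrable_on_id_minus:
  fixes S :: "'a::euclidean_space set"
  assumes "bounded S" "S \<in> sets lebesgue"
  shows "(\<lambda>x. x - p) integrable_on S"
  using integrable_on_id[OF assms] integrable_on_const[OF bounded_set_imp_lmeasurable[OF assms]]
  by (rule integrable_diff)

lemma integral_id_minus_const:
  fixes S :: "'a::euclidean_space set"
  assumes "bounded S" "S \<in> sets lebesgue"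
  shows "integral S (\<lambda>x. x - p) = integral S (\<lambda>x. x) - measure lebesgue S *\<^sub>R p"
proof -
  have S: "S \<in> lmeasurable"
    using assms by (rule bounded_set_imp_lmeasurable)
  have "((\<lambda>x. 1::real) has_integral measure lebesgue S) S"
    using integrable_integral[OF integrable_on_const[OF S]] by (simp add: lmeasure_integral[OF S])
  then have "((\<lambda>x. p) has_integral measure lebesgue S *\<^sub>R p) S"
    using has_integral_scaleR_left[of "\<lambda>x. 1::real" _ S p] by simp
  then have "integral S (\<lambda>x. p) = measure lebesgue S *\<^sub>R p"
    by (rule integral_unique)
  then show ?thesis
    using integral_diff[OF integrable_on_id[OF assms] integrable_on_const[OF S]] by simp
qed

lemma norm_integral_id_minus_le:
  fixes S :: "'a::euclidean_space set"
  assumes "S \<in> sets lebesgue" "S \<subseteq> cball p R"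
  shows "norm (integral S (\<lambda>x. x - p)) \<le> R * measure lebesgue S"
proof -
  have "bounded S"
    using assms(2) bounded_cball bounded_subset by blast
  then have S: "S \<in> lmeasurable"
    using assms(1) by (rule bounded_set_imp_lmeasurable)
  have "(\<lambda>x. x - p) integrable_on S"
    using \<open>bounded S\<close> assms(1) by (rule integrable_on_id_minus)
  then have "norm (integral S (\<lambda>x. x - p)) \<le> integral S (\<lambda>x. R)"
    by (rule integral_norm_bound_integral[OF _ integrable_on_const[OF S]])
       (use assms(2) in \<open>auto simp: dist_norm norm_minus_commute\<close>)
  also have "\<dots> = R * measure lebesgue S"
    using lmeasure_integral[OF S] integral_mult_right[of S R "\<lambda>x. 1"] by simp
  finally show ?thesis .
qed

lemma measure_ball_conv_unit_ball:
  fixes c :: "'a::euclidean_space"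
  assumes "0 \<le> R"
  shows "measure lebesgue (ball c R) = R ^ DIM('a) * measure lebesgue (ball (0::'a) 1)"
    and "measure lebesgue (cball c R) = R ^ DIM('a) * measure lebesgue (ball (0::'a) 1)"
  using content_ball_conv_unit_ball[OF assms, of c] content_cball_conv_ball[of c R]
  by (simp_all add: measure_completion)

lemma center_of_mass_ball:
  fixes a :: "'a::euclidean_space"
  assumes "0 < R"
  shows "center_of_mass (ball a R) = a"
proof -
  have "0 < measure lebesgue (ball a R)"
    using content_ball_pos[OF assms, of a] by (simp add: measure_completion)
  moreover have "integral (ball a R) (\<lambda>x. x) = measure lebesgue (ball a R) *\<^sub>R a"
    using integral_id_minus_const[of "ball a R" a] integral_ball_minus_center[of a R] by simp
  ultimately show ?thesis
    by (simp add: center_of_mass_def)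
qed

lemma measure_mult_norm_center_of_mass_diff_le:
  fixes A :: "'a::euclidean_space set" and R1 R2 :: real
  assumes A: "A \<in> sets lebesgue" and inner: "ball p R1 \<subseteq> A" and outer: "A \<subseteq> cball p R2"
    and "0 < R1"
  shows "measure lebesgue A * norm (center_of_mass A - p) \<le> R2 * measure lebesgue (A - ball p R1)"
proof -
  have "bounded A"
    using outer bounded_cball bounded_subset by blast
  then have A_fin: "A \<in> lmeasurable"
    using A by (rule bounded_set_imp_lmeasurable)
  have "0 < measure lebesgue (ball p R1)"
    using content_ball_pos[OF \<open>0 < R1\<close>, of p] by (simp add: measure_completion)
  also have "\<dots> \<le> measure lebesgue A"
    using measure_mono_fmeasurable[OF inner _ A_fin] by simp
  finally have "0 < measure lebesgue A" .
  then have "measure lebesgue A *\<^sub>R (center_of_mass A - p) = integral A (\<lambda>x. x - p)"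
    using integral_id_minus_const[OF \<open>bounded A\<close> A, of p]
    unfolding center_of_mass_def by (simp add: algebra_simps)
  \<comment> \<open>The ball is symmetric about p, so only the shell A - ball p R1 contributes.\<close>
  also have "\<dots> = integral (A - ball p R1) (\<lambda>x. x - p)"
    using integral_setdiff[of "\<lambda>x. x - p" A "ball p R1"] inner A \<open>bounded A\<close>
    by (simp add: integrable_on_id_minus integral_ball_minus_center)
  finally have "measure lebesgue A * norm (center_of_mass A - p)
      = norm (integral (A - ball p R1) (\<lambda>x. x - p))"
    using \<open>0 < measure lebesgue A\<close> by (metis norm_scaleR abs_of_pos)
  also have "\<dots> \<le> R2 * measure lebesgue (A - ball p R1)"
    using A outer by (intro norm_integral_id_minus_le) auto
  finally show ?thesis .
qed

lemma one_minus_power_le: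
  fixes q :: real
  assumes "0 \<le> q"
  shows "1 - q ^ n \<le> n * (1 - q)"
proof -
  have "1 + n * (q - 1) \<le> q ^ n"
    using Bernoulli_inequality[of "q - 1" n] assms by simp
  then show ?thesis
    by (simp add: algebra_simps)
qed

lemma center_of_mass_between_balls:
  fixes A :: "'a::euclidean_space set" and R1 R2 :: real
  assumes A: "A \<in> sets lebesgue" and inner: "ball p R1 \<subseteq> A" and outer: "A \<subseteq> cball p R2"
    and "0 < R1"
  shows "norm (center_of_mass A - p) \<le> real DIM('a) * (R2 - R1)"
proof -
  define n where "n = DIM('a)"
  define \<omega> where "\<omega> = measure lebesgue (ball (0::'a) 1)"
  define \<mu> where "\<mu> = measure lebesgue A"
  define q where "q = R1 / R2"
  have "bounded A"
    using outer bounded_cball bounded_subset by blast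
  then have A_fin: "A \<in> lmeasurable"
    using A by (rule bounded_set_imp_lmeasurable)
  have "0 < \<omega>"
    unfolding \<omega>_def using content_ball_pos[of 1 "0::'a"] by (simp add: measure_completion)
  have "R1 \<le> R2"
    using inner outer \<open>0 < R1\<close> ball_subset_cball_iff[of p R1 p R2] by auto
  then have "0 \<le> R2"
    using \<open>0 < R1\<close> by simp
  have inner_measure: "R1 ^ n * \<omega> \<le> \<mu>"
    using measure_mono_fmeasurable[OF inner _ A_fin] measure_ball_conv_unit_ball(1)[of R1 p] \<open>0 < R1\<close>
    unfolding n_def \<omega>_def \<mu>_def by simp
  have "\<mu> \<le> R2 ^ n * \<omega>"
    using measure_mono_fmeasurable[OF outer A lmeasurable_cball] measure_ball_conv_unit_ball(2)[of R2 p] \<open>0 \<le> R2\<close>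
    unfolding n_def \<omega>_def \<mu>_def by simp
  have "0 < \<mu>"
    using inner_measure \<open>0 < \<omega>\<close> \<open>0 < R1\<close>
    by (metis mult_pos_pos zero_less_power order_less_le_trans)
  have "\<mu> * norm (center_of_mass A - p) \<le> R2 * (\<mu> - R1 ^ n * \<omega>)"
    using measure_mult_norm_center_of_mass_diff_le[OF A inner outer \<open>0 < R1\<close>]
      measurable_measure_Diff[OF A_fin _ inner] measure_ball_conv_unit_ball(1)[of R1 p] \<open>0 < R1\<close>
    unfolding n_def \<omega>_def \<mu>_def by simp
  also have "\<dots> \<le> R2 * (\<mu> - q ^ n * \<mu>)"
  proof -
    have "q ^ n * \<mu> \<le> q ^ n * (R2 ^ n * \<omega>)"
      using \<open>\<mu> \<le> R2 ^ n * \<omega>\<close> \<open>0 < R1\<close> \<open>0 \<le> R2\<close> unfolding q_def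
      by (simp add: mult_left_mono)
    also have "\<dots> = R1 ^ n * \<omega>"
      using \<open>0 < R1\<close> \<open>R1 \<le> R2\<close> unfolding q_def by (simp add: power_divide)
    finally show ?thesis
      using \<open>0 \<le> R2\<close> by (simp add: mult_left_mono)
  qed
  also have "\<dots> = \<mu> * (R2 * (1 - q ^ n))"
    by (simp add: algebra_simps)
  finally have "norm (center_of_mass A - p) \<le> R2 * (1 - q ^ n)"
    using \<open>0 < \<mu>\<close> by (simp add: mult_le_cancel_left_pos)
  also have "\<dots> \<le> R2 * (n * (1 - q))"
    using one_minus_power_le[of q n] \<open>0 < R1\<close> \<open>0 \<le> R2\<close> unfolding q_def
    by (simp add: mult_left_mono)
  also have "\<dots> = n * (R2 - R1)"
    using \<open>0 < R1\<close> \<open>R1 \<le> R2\<close> unfolding q_def by (simp add: field_simps)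
  finally show ?thesis
    unfolding n_def .
qed

lemma continuous_image_open_in_sets_lebesgue:
  fixes f :: "'a::euclidean_space \<Rightarrow> 'b::euclidean_space"
  assumes "open S" "continuous_on S f"
  shows "f ` S \<in> sets lebesgue"
proof -
  obtain C :: "nat \<Rightarrow> 'a set" where C: "\<And>n. compact (C n)" "\<And>n. C n \<subseteq> S" "\<Union>(range C) = S"
    using open_Union_compact_subsets[OF \<open>open S\<close>] by (metis (no_types))
  have "compact (f ` C n)" for n
    using C assms(2) by (meson compact_continuous_image continuous_on_subset)
  then have "(\<Union>n. f ` C n) \<in> sets lebesgue"
    by (intro sets.countable_UN) (use fmeasurableD lmeasurable_compact in blast)
  moreover have "f ` S = (\<Union>n. f ` C n)"
    using C(3) by blast
  ultimately show ?thesis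
    by simp
qed

section \<open>Maps on closed balls\<close>

lemma ball_subset_image_if_outward:
  fixes G :: "'a::euclidean_space \<Rightarrow> 'a"
  assumes "0 < \<rho>" and cont: "continuous_on (cball 0 \<rho>) G"
    and outward: "\<And>y. y \<in> sphere 0 \<rho> \<Longrightarrow> R * \<rho> \<le> (G y - p) \<bullet> y"
  shows "ball p R \<subseteq> G ` cball 0 \<rho>"
proof
  fix q :: 'a
  assume "q \<in> ball p R"
  then have "norm (q - p) < R"
    by (simp add: dist_norm norm_minus_commute)
  show "q \<in> G ` cball 0 \<rho>"
  proof (rule ccontr)
    assume "q \<notin> G ` cball 0 \<rho>"
    then have ne: "G y - q \<noteq> 0" if "y \<in> cball 0 \<rho>" for y
      using that by force
    \<comment> \<open>A fixed point of this self-map of the ball would be a point of the sphere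
        where G - q points inward.\<close>
    define P where "P y = - (\<rho> / norm (G y - q)) *\<^sub>R (G y - q)" for y
    have norm_P: "norm (P y) = \<rho>" if "y \<in> cball 0 \<rho>" for y
      unfolding P_def using ne[OF that] \<open>0 < \<rho>\<close> by simp
    have "continuous_on (cball 0 \<rho>) P"
      unfolding P_def using ne by (intro continuous_intros cont) auto
    moreover have "P \<in> cball 0 \<rho> \<rightarrow> cball 0 \<rho>"
      using norm_P by simp
    moreover have "cball (0::'a) \<rho> \<noteq> {}"
      using \<open>0 < \<rho>\<close> by simp
    ultimately obtain y where y: "y \<in> cball 0 \<rho>" "P y = y"
      using brouwer[OF compact_cball convex_cball] by blast
    then have "y \<in> sphere 0 \<rho>"
      using norm_P by force
    have "(G y - q) \<bullet> y = (G y - q) \<bullet> P y"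
      using y(2) by simp
    also have "\<dots> = - (\<rho> / norm (G y - q)) * ((G y - q) \<bullet> (G y - q))"
      unfolding P_def by (rule inner_scaleR_right)
    also have "\<dots> = - \<rho> * norm (G y - q)"
      using ne[OF y(1)] by (simp add: power2_norm_eq_inner[symmetric] power2_eq_square)
    finally have "(G y - p) \<bullet> y - (q - p) \<bullet> y < 0"
      using ne[OF y(1)] \<open>0 < \<rho>\<close> by (simp add: inner_diff_left)
    moreover have "(q - p) \<bullet> y \<le> norm (q - p) * \<rho>"
      using norm_cauchy_schwarz[of "q - p" y] \<open>y \<in> sphere 0 \<rho>\<close> by simp
    moreover have "norm (q - p) * \<rho> < R * \<rho>"
      using \<open>norm (q - p) < R\<close> \<open>0 < \<rho>\<close> by simp
    ultimately show False
      using outward[OF \<open>y \<in> sphere 0 \<rho>\<close>] by linarith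
  qed
qed

lemma abs_le_lipschitz_vanishing_on_sphere:
  fixes h :: "'a::euclidean_space \<Rightarrow> real"
  assumes lip: "B-lipschitz_on (cball 0 r) h" and zero: "\<And>y. y \<in> sphere 0 r \<Longrightarrow> h y = 0"
    and "norm x \<le> r"
  shows "\<bar>h x\<bar> \<le> B * (r - norm x)"
proof -
  obtain u :: 'a where u: "norm u = 1" "x = norm x *\<^sub>R u"
  proof (cases "x = 0")
    case True
    obtain u :: 'a where "norm u = 1"
      using vector_choose_size zero_le_one by blast
    with True show ?thesis
      using that by simp
  next
    case False
    then show ?thesis
      using that[of "sgn x"] by (simp add: norm_sgn sgn_div_norm)
  qed
  have "0 \<le> r"
    using \<open>norm x \<le> r\<close> norm_ge_zero order_trans by blast
  define y where "y = r *\<^sub>R u"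
  have "y \<in> sphere 0 r"
    unfolding y_def using u(1) \<open>0 \<le> r\<close> by simp
  have "dist x y = r - norm x"
  proof -
    have "x - y = (norm x - r) *\<^sub>R u"
      unfolding y_def by (subst u(2)) (simp add: scaleR_diff_left)
    then show ?thesis
      using u(1) \<open>norm x \<le> r\<close> by (simp add: dist_norm)
  qed
  moreover have "dist (h x) (h y) \<le> B * dist x y"
    using \<open>y \<in> sphere 0 r\<close> \<open>norm x \<le> r\<close> by (intro lipschitz_onD[OF lip]) auto
  ultimately show ?thesis
    using zero[OF \<open>y \<in> sphere 0 r\<close>] by (simp add: dist_real_def)
qed

section \<open>Solutions of autonomous differential equations\<close>

lemma continuous_on_less_induct:
  fixes g :: "real \<Rightarrow> real"
  assumes "continuous_on {a..b} g"
    and step: "\<And>s. s \<in> {a..b} \<Longrightarrow> (\<And>\<sigma>. \<sigma> \<in> {a..<s} \<Longrightarrow> g \<sigma> < c) \<Longrightarrow> g s < c"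
    and "s \<in> {a..b}"
  shows "g s < c"
proof (rule ccontr)
  assume "\<not> g s < c"
  define Z where "Z = {s \<in> {a..b}. c \<le> g s}"
  have "closed Z"
    unfolding Z_def using assms(1) by (intro continuous_on_closed_Collect_le continuous_intros) auto
  moreover have "Z \<noteq> {}" "bdd_below Z"
    using \<open>s \<in> {a..b}\<close> \<open>\<not> g s < c\<close> unfolding Z_def
    by (auto intro: bdd_belowI[of _ a])
  ultimately have "Inf Z \<in> Z"
    using closed_contains_Inf by blast
  have "g \<sigma> < c" if "\<sigma> \<in> {a..<Inf Z}" for \<sigma>
  proof -
    have "\<sigma> \<notin> Z"
      using that cInf_lower[OF _ \<open>bdd_below Z\<close>] by force
    moreover have "\<sigma> \<in> {a..b}"
      using that \<open>Inf Z \<in> Z\<close> unfolding Z_def by auto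
    ultimately show ?thesis
      unfolding Z_def by auto
  qed
  then have "g (Inf Z) < c"
    using \<open>Inf Z \<in> Z\<close> step unfolding Z_def by blast
  then show False
    using \<open>Inf Z \<in> Z\<close> unfolding Z_def by simp
qed

lemma norm_diff_le_vector_derivative_bound:
  fixes f :: "real \<Rightarrow> 'a::real_normed_vector"
  assumes "a \<le> b"
    and deriv: "\<And>s. s \<in> {a..b} \<Longrightarrow> (f has_vector_derivative f' s) (at s)"
    and bound: "\<And>s. s \<in> {a<..<b} \<Longrightarrow> norm (f' s) \<le> B"
  shows "norm (f b - f a) \<le> B * (b - a)"
proof (cases "a = b")
  case False
  with \<open>a \<le> b\<close> have "a < b"
    by simp
  have "continuous_on {a..b} f"
    using deriv by (meson continuous_at_imp_continuous_on has_vector_derivative_continuous)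
  then have "norm (f b - f a) \<le> B * b - B * a"
    by (rule differentiable_bound_general[OF \<open>a < b\<close> _ continuous_on_mult_left[OF continuous_on_id],
          where f' = f' and \<phi>' = "\<lambda>_. B"])
       (use deriv bound in \<open>auto intro!: derivative_eq_intros\<close>)
  then show ?thesis
    by (simp add: algebra_simps)
qed simp

lemma ode_solution_displacement_le:
  fixes y :: "real \<Rightarrow> 'a::real_normed_vector"
  assumes "0 \<le> M" "M * T < \<rho>"
    and deriv: "\<And>s. s \<in> {0..T} \<Longrightarrow> (y has_vector_derivative V (y s)) (at s)"
    and bound: "\<And>z. z \<in> cball (y 0) \<rho> \<Longrightarrow> norm (V z) \<le> M"
    and "t \<in> {0..T}"
  shows "norm (y t - y 0) \<le> M * t"
proof -
  have displacement: "norm (y s - y 0) \<le> M * s"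
    if "s \<in> {0..T}" and inside: "\<And>\<sigma>. \<sigma> \<in> {0<..<s} \<Longrightarrow> norm (y \<sigma> - y 0) < \<rho>" for s
  proof -
    have "norm (y s - y 0) \<le> M * (s - 0)"
    proof (rule norm_diff_le_vector_derivative_bound)
      show "0 \<le> s"
        using that by simp
      show "(y has_vector_derivative V (y \<sigma>)) (at \<sigma>)" if "\<sigma> \<in> {0..s}" for \<sigma>
        using that \<open>s \<in> {0..T}\<close> deriv by simp
      show "norm (V (y \<sigma>)) \<le> M" if "\<sigma> \<in> {0<..<s}" for \<sigma>
        using inside[OF that] by (intro bound) (simp add: dist_norm norm_minus_commute)
    qed
    then show ?thesis
      by simp
  qed
  have "continuous_on {0..T} (\<lambda>s. norm (y s - y 0))"
    using deriv by (intro continuous_intros continuous_at_imp_continuous_on ballI)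
      (meson has_vector_derivative_continuous)
  then have "norm (y s - y 0) < \<rho>" if "s \<in> {0..T}" for s
  proof (rule continuous_on_less_induct[OF _ _ that])
    fix s
    assume "s \<in> {0..T}" and "\<And>\<sigma>. \<sigma> \<in> {0..<s} \<Longrightarrow> norm (y \<sigma> - y 0) < \<rho>"
    then have "norm (y s - y 0) \<le> M * s"
      by (intro displacement) auto
    also have "\<dots> \<le> M * T"
      using \<open>s \<in> {0..T}\<close> \<open>0 \<le> M\<close> by (simp add: mult_left_mono)
    finally show "norm (y s - y 0) < \<rho>"
      using \<open>M * T < \<rho>\<close> by simp
  qed
  then show ?thesis
    using \<open>t \<in> {0..T}\<close> by (intro displacement) auto
qed

lemma ode_solution_taylor_le:
  fixes y :: "real \<Rightarrow> 'a::real_normed_vector"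
  assumes "0 \<le> t"
    and deriv: "\<And>s. s \<in> {0..t} \<Longrightarrow> (y has_vector_derivative V (y s)) (at s)"
    and lip: "L-lipschitz_on K V" and in_K: "\<And>s. s \<in> {0..t} \<Longrightarrow> y s \<in> K"
    and displacement: "\<And>s. s \<in> {0..t} \<Longrightarrow> norm (y s - y 0) \<le> M * s"
  shows "norm (y t - y 0 - t *\<^sub>R V (y 0)) \<le> L * M * t\<^sup>2"
proof -
  have "norm ((\<lambda>s. y s - y 0 - s *\<^sub>R V (y 0)) t - (\<lambda>s. y s - y 0 - s *\<^sub>R V (y 0)) 0)
      \<le> (L * M * t) * (t - 0)"
  proof (rule norm_diff_le_vector_derivative_bound[OF \<open>0 \<le> t\<close>])
    show "((\<lambda>s. y s - y 0 - s *\<^sub>R V (y 0)) has_vector_derivative V (y s) - V (y 0)) (at s)"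
      if "s \<in> {0..t}" for s
      using deriv[OF that] by (auto intro!: derivative_eq_intros)
  next
    fix s
    assume s: "s \<in> {0<..<t}"
    have "0 \<le> L"
      using lip lipschitz_on_nonneg by blast
    have "norm (y t - y 0) \<le> M * t"
      using displacement \<open>0 \<le> t\<close> by simp
    then have "0 \<le> M * t"
      by (rule order_trans[OF norm_ge_zero])
    with s have "0 \<le> M"
      by (simp add: zero_le_mult_iff)
    have "norm (V (y s) - V (y 0)) \<le> L * norm (y s - y 0)"
      using lipschitz_onD[OF lip in_K in_K, of s 0] s \<open>0 \<le> t\<close> by (simp add: dist_norm)
    also have "\<dots> \<le> L * (M * s)"
      using displacement[of s] s \<open>0 \<le> L\<close> by (simp add: mult_left_mono)
    also have "\<dots> \<le> L * (M * t)"
      using s \<open>0 \<le> L\<close> \<open>0 \<le> M\<close> by (simp add: mult_left_mono)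
    finally show "norm (V (y s) - V (y 0)) \<le> L * M * t"
      by (simp only: mult.assoc)
  qed
  then show ?thesis
    by (simp add: power2_eq_square mult.assoc)
qed

lemma ode_solutions_dist_le:
  fixes y z :: "real \<Rightarrow> 'a::real_normed_vector"
  assumes "0 \<le> t" "L * t \<le> 1 / 2"
    and deriv_y: "\<And>s. s \<in> {0..t} \<Longrightarrow> (y has_vector_derivative V (y s)) (at s)"
    and deriv_z: "\<And>s. s \<in> {0..t} \<Longrightarrow> (z has_vector_derivative V (z s)) (at s)"
    and lip: "L-lipschitz_on K V"
    and in_K: "\<And>s. s \<in> {0..t} \<Longrightarrow> y s \<in> K" "\<And>s. s \<in> {0..t} \<Longrightarrow> z s \<in> K"
  shows "norm (y t - z t) \<le> 2 * norm (y 0 - z 0)"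
proof -
  define d where "d s = y s - z s" for s
  have "continuous_on {0..t} (\<lambda>s. norm (d s))"
    unfolding d_def using deriv_y deriv_z
    by (intro continuous_intros continuous_at_imp_continuous_on ballI)
       (meson has_vector_derivative_continuous)+
  then obtain s0 where s0: "s0 \<in> {0..t}" and max: "\<And>s. s \<in> {0..t} \<Longrightarrow> norm (d s) \<le> norm (d s0)"
    using continuous_attains_sup[OF compact_Icc] \<open>0 \<le> t\<close>
    by (metis atLeastAtMost_iff empty_iff order_refl)
  have "0 \<le> L"
    using lip lipschitz_on_nonneg by blast
  have "norm (d s0 - d 0) \<le> (L * norm (d s0)) * (s0 - 0)"
  proof (rule norm_diff_le_vector_derivative_bound)
    show "(d has_vector_derivative V (y s) - V (z s)) (at s)" if "s \<in> {0..s0}" for s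
      unfolding d_def using that s0 deriv_y[of s] deriv_z[of s] by (auto intro!: derivative_eq_intros)
    show "norm (V (y s) - V (z s)) \<le> L * norm (d s0)" if "s \<in> {0<..<s0}" for s
    proof -
      have "norm (V (y s) - V (z s)) \<le> L * norm (d s)"
        using lipschitz_onD[OF lip in_K(1) in_K(2)] that s0 by (auto simp: dist_norm d_def)
      also have "\<dots> \<le> L * norm (d s0)"
        using max[of s] that s0 \<open>0 \<le> L\<close> by (simp add: mult_left_mono)
      finally show ?thesis .
    qed
  qed (use s0 in simp)
  moreover have "L * norm (d s0) * s0 \<le> norm (d s0) / 2"
  proof -
    have "L * s0 \<le> 1 / 2"
      using s0 \<open>0 \<le> L\<close> \<open>L * t \<le> 1 / 2\<close>
      by (meson atLeastAtMost_iff mult_left_mono order_trans)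
    from mult_left_mono[OF this norm_ge_zero[of "d s0"]] show ?thesis
      by (simp add: algebra_simps)
  qed
  ultimately have "norm (d s0) \<le> 2 * norm (d 0)"
    using norm_triangle_ineq2[of "d s0" "d 0"] by simp
  then show ?thesis
    using max[of t] \<open>0 \<le> t\<close> unfolding d_def by simp
qed

lemma C1_field_continuous_on:
  assumes "C1_field V"
  shows "continuous_on S V"
  using assms unfolding C1_field_def
  by (meson continuous_at_imp_continuous_on has_derivative_continuous)

lemma C1_field_lipschitz_on:
  fixes V :: "'a::euclidean_space \<Rightarrow> 'a"
  assumes "C1_field V" "compact K" "convex K"
  obtains L where "L-lipschitz_on K V"
proof -
  obtain D :: "'a \<Rightarrow> 'a \<Rightarrow>\<^sub>L 'a" where D: "\<And>x. (V has_derivative blinfun_apply (D x)) (at x)"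
    and "continuous_on UNIV D"
    using assms(1) unfolding C1_field_def by blast
  then have "compact (D ` K)"
    using assms(2) by (meson compact_continuous_image continuous_on_subset subset_UNIV)
  then obtain B where B: "\<And>x. x \<in> K \<Longrightarrow> norm (D x) \<le> B"
    by (meson compact_imp_bounded bounded_iff image_eqI)
  have "(max B 0)-lipschitz_on K V"
  proof (rule lipschitz_onI)
    fix x y
    assume "x \<in> K" "y \<in> K"
    have "norm (V x - V y) \<le> max B 0 * norm (x - y)"
    proof (rule differentiable_bound[OF assms(3) _ _ \<open>x \<in> K\<close> \<open>y \<in> K\<close>])
      show "(V has_derivative blinfun_apply (D z)) (at z within K)" for z
        using D has_derivative_at_withinI by blast
      show "onorm (blinfun_apply (D z)) \<le> max B 0" if "z \<in> K" for z
        using B[OF that] by (simp add: norm_blinfun.rep_eq[symmetric])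
    qed
    then show "dist (V x) (V y) \<le> max B 0 * dist x y"
      by (simp add: dist_norm)
  qed simp
  then show thesis
    by (rule that)
qed

section \<open>Short-time behaviour of the flow\<close>

(* M and L bound V and its Lipschitz constant on the unit neighbourhood of the ball; T is short
   enough for trajectories from the ball to stay there and for the flow to be 2-Lipschitz. *)
locale short_time_flow =
  fixes V :: "'a::euclidean_space \<Rightarrow> 'a" and phi :: "real \<Rightarrow> 'a \<Rightarrow> 'a" and r e M L T :: real
  assumes flow: "is_flow_on V e (ball 0 r) phi"
    and V_bound: "\<And>z. z \<in> cball 0 (r + 1) \<Longrightarrow> norm (V z) \<le> M"
    and V_lipschitz: "L-lipschitz_on (cball 0 (r + 1)) V"
    and r_pos: "0 < r" and T_pos: "0 < T" and T_less: "T < e"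
    and MT_less: "M * T < 1" and LT_le: "L * T \<le> 1 / 2"
begin

lemma M_nonneg: "0 \<le> M"
proof -
  have "norm (V 0) \<le> M"
    using V_bound r_pos by simp
  then show ?thesis
    by (rule order_trans[OF norm_ge_zero])
qed

lemma L_nonneg: "0 \<le> L"
  using V_lipschitz lipschitz_on_nonneg by blast

lemma flow_0: "x \<in> ball 0 r \<Longrightarrow> phi 0 x = x"
  using flow unfolding is_flow_on_def by blast

lemma flow_has_vector_derivative:
  assumes "x \<in> ball 0 r" "s \<in> {0..T}"
  shows "((\<lambda>s. phi s x) has_vector_derivative V (phi s x)) (at s)"
  using flow assms T_less T_pos unfolding is_flow_on_def by auto

lemma flow_displacement_le:
  assumes "x \<in> ball 0 r" "t \<in> {0..T}"
  shows "norm (phi t x - x) \<le> M * t"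
proof -
  have "cball x 1 \<subseteq> cball 0 (r + 1)"
    using assms(1) by (subst cball_subset_cball_iff) simp
  then have "norm (V z) \<le> M" if "z \<in> cball x 1" for z
    using that V_bound by blast
  then show ?thesis
    using ode_solution_displacement_le[OF M_nonneg MT_less flow_has_vector_derivative[OF assms(1)] _ assms(2)]
    by (simp add: flow_0[OF assms(1)])
qed

lemma flow_in_cball:
  assumes "x \<in> ball 0 r" "t \<in> {0..T}"
  shows "phi t x \<in> cball 0 (r + 1)"
proof -
  have "M * t \<le> M * T"
    using assms(2) M_nonneg by (simp add: mult_left_mono)
  then have "norm (phi t x - x) \<le> 1"
    using flow_displacement_le[OF assms] MT_less by linarith
  then show ?thesis
    using assms(1) norm_triangle_ineq2[of "phi t x" x] by simp
qed

lemma flow_taylor_le: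
  assumes "x \<in> ball 0 r" "t \<in> {0..T}"
  shows "norm (phi t x - x - t *\<^sub>R V x) \<le> L * M * t\<^sup>2"
  using ode_solution_taylor_le[of t "\<lambda>s. phi s x" V L "cball 0 (r + 1)" M] assms
    flow_has_vector_derivative flow_in_cball flow_displacement_le V_lipschitz
  by (simp add: flow_0)

lemma lipschitz_on_flow:
  assumes "t \<in> {0..T}"
  shows "2-lipschitz_on (ball 0 r) (phi t)"
proof (rule lipschitz_onI)
  fix x z :: 'a
  assume "x \<in> ball 0 r" "z \<in> ball 0 r"
  moreover have "L * t \<le> 1 / 2"
    using assms L_nonneg LT_le by (meson atLeastAtMost_iff mult_left_mono order_trans)
  ultimately show "dist (phi t x) (phi t z) \<le> 2 * dist x z"
    using ode_solutions_dist_le[of t L "\<lambda>s. phi s x" V "\<lambda>s. phi s z" "cball 0 (r + 1)"] assms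
      flow_has_vector_derivative flow_in_cball V_lipschitz
    by (simp add: flow_0 dist_norm)
qed simp

end

locale radial_linear_flow = short_time_flow +
  fixes b :: "'a::euclidean_space"
  assumes radial_linear: "\<And>x. x \<in> sphere 0 r \<Longrightarrow> V x \<bullet> x = b \<bullet> x"
begin

lemma radial_defect_le:
  assumes "norm x \<le> r"
  shows "\<bar>x \<bullet> (V x - b)\<bar> \<le> (M + norm b + r * L) * (r - norm x)"
proof (rule abs_le_lipschitz_vanishing_on_sphere[OF _ _ assms])
  show "(M + norm b + r * L)-lipschitz_on (cball 0 r) (\<lambda>x. x \<bullet> (V x - b))"
  proof (rule lipschitz_onI)
    fix x z :: 'a
    assume "x \<in> cball 0 r" "z \<in> cball 0 r"
    then have in_cball: "x \<in> cball 0 (r + 1)" "z \<in> cball 0 (r + 1)" and "norm z \<le> r"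
      by auto
    have "\<bar>(x - z) \<bullet> (V x - b)\<bar> \<le> norm (x - z) * (M + norm b)"
      using Cauchy_Schwarz_ineq2[of "x - z" "V x - b"] V_bound[OF in_cball(1)] norm_triangle_ineq4[of "V x" b]
      by (smt (verit, best) mult_left_mono norm_ge_zero)
    moreover have "\<bar>z \<bullet> (V x - V z)\<bar> \<le> r * (L * norm (x - z))"
    proof -
      have "norm (V x - V z) \<le> L * norm (x - z)"
        using lipschitz_onD[OF V_lipschitz in_cball] by (simp add: dist_norm)
      then show ?thesis
        using Cauchy_Schwarz_ineq2[of z "V x - V z"] \<open>norm z \<le> r\<close>
        by (smt (verit, best) mult_mono norm_ge_zero)
    qed
    moreover have "x \<bullet> (V x - b) - z \<bullet> (V z - b) = (x - z) \<bullet> (V x - b) + z \<bullet> (V x - V z)"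
      by (simp add: algebra_simps)
    ultimately show "dist (x \<bullet> (V x - b)) (z \<bullet> (V z - b)) \<le> (M + norm b + r * L) * dist x z"
      by (simp add: dist_real_def dist_norm algebra_simps)
  qed (use M_nonneg L_nonneg r_pos in simp)
next
  show "y \<bullet> (V y - b) = 0" if "y \<in> sphere 0 r" for y
    using radial_linear[OF that] by (simp add: inner_diff_right inner_commute)
qed

lemma norm_flow_minus_translation_sq_le:
  assumes x: "x \<in> ball 0 r" and t: "t \<in> {0..T}" "t \<le> 1"
  shows "(norm (phi t x - t *\<^sub>R b))\<^sup>2
    \<le> (norm x)\<^sup>2 + 2 * t * (x \<bullet> (V x - b)) + (2 * r * L * M + (M + norm b + L * M)\<^sup>2) * t\<^sup>2"
proof -
  define E where "E = phi t x - x - t *\<^sub>R V x"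
  define u where "u = t *\<^sub>R (V x - b) + E"
  have E: "norm E \<le> L * M * t\<^sup>2"
    unfolding E_def using flow_taylor_le[OF x t(1)] .
  have "norm x < r"
    using x by simp
  have "norm u \<le> (M + norm b + L * M) * t"
  proof -
    have "norm (V x - b) \<le> M + norm b"
      using V_bound[of x] \<open>norm x < r\<close> norm_triangle_ineq4[of "V x" b] by simp
    then have "norm (t *\<^sub>R (V x - b)) \<le> (M + norm b) * t"
      using t by (simp add: mult.commute mult_left_mono)
    moreover have "L * M * t\<^sup>2 \<le> L * M * t"
      using t L_nonneg M_nonneg by (simp add: power2_eq_square mult_left_le_one_le mult_left_mono)
    ultimately show ?thesis
      unfolding u_def using E norm_triangle_ineq[of "t *\<^sub>R (V x - b)" E] by (simp add: algebra_simps)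
  qed
  then have "(norm u)\<^sup>2 \<le> (M + norm b + L * M)\<^sup>2 * t\<^sup>2"
    by (metis norm_ge_zero power_mono power_mult_distrib)
  moreover have "x \<bullet> E \<le> r * (L * M * t\<^sup>2)"
    using Cauchy_Schwarz_ineq2[of x E] E \<open>norm x < r\<close> abs_le_iff
    by (smt (verit, best) mult_mono norm_ge_zero)
  moreover have "phi t x - t *\<^sub>R b = x + u"
    unfolding u_def E_def by (simp add: algebra_simps)
  then have "(norm (phi t x - t *\<^sub>R b))\<^sup>2
      = (norm x)\<^sup>2 + 2 * t * (x \<bullet> (V x - b)) + 2 * (x \<bullet> E) + (norm u)\<^sup>2"
    unfolding u_def by (simp add: power2_norm_eq_inner inner_add_left inner_add_right inner_commute algebra_simps)
  ultimately show ?thesis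
    by (simp add: algebra_simps)
qed

lemma norm_flow_minus_translation_le:
  assumes x: "x \<in> ball 0 r" and t: "t \<in> {0..T}" "t \<le> 1"
    and small: "2 * t * (M + norm b + r * L) \<le> r"
  shows "norm (phi t x - t *\<^sub>R b)
    \<le> r + (2 * r * L * M + (M + norm b + L * M)\<^sup>2) / (2 * r) * t\<^sup>2"
proof -
  define C where "C = 2 * r * L * M + (M + norm b + L * M)\<^sup>2"
  have "norm x < r"
    using x by simp
  have "2 * t * (x \<bullet> (V x - b)) \<le> 2 * t * ((M + norm b + r * L) * (r - norm x))"
    using radial_defect_le[of x] \<open>norm x < r\<close> t by (simp add: abs_le_iff mult_left_mono)
  also have "\<dots> \<le> r * (r - norm x)"
    using mult_right_mono[OF small, of "r - norm x"] \<open>norm x < r\<close> by (simp add: mult.assoc)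
  finally have "(norm (phi t x - t *\<^sub>R b))\<^sup>2 \<le> (norm x)\<^sup>2 + r * (r - norm x) + C * t\<^sup>2"
    using norm_flow_minus_translation_sq_le[OF x t] unfolding C_def by linarith
  also have "\<dots> \<le> r\<^sup>2 + C * t\<^sup>2"
    using mult_right_mono[of "norm x" r "norm x"] \<open>norm x < r\<close>
    by (simp add: power2_eq_square algebra_simps)
  also have "\<dots> \<le> r\<^sup>2 + C * t\<^sup>2 + (C / (2 * r) * t\<^sup>2)\<^sup>2"
    by simp
  also have "\<dots> = (r + C / (2 * r) * t\<^sup>2)\<^sup>2"
    using r_pos by (simp add: power2_eq_square field_simps)
  finally have square_le: "(norm (phi t x - t *\<^sub>R b))\<^sup>2 \<le> (r + C / (2 * r) * t\<^sup>2)\<^sup>2" .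
  have "0 \<le> r + C / (2 * r) * t\<^sup>2"
    unfolding C_def using r_pos L_nonneg M_nonneg by simp
  with square_le show ?thesis
    unfolding C_def by (rule power2_le_imp_le)
qed

lemma inner_flow_minus_translation_ge:
  assumes x: "x \<in> ball 0 r" and t: "t \<in> {0..T}" "t \<le> 1"
  shows "(norm x)\<^sup>2 - (M + norm b + r * L) * (r - norm x) - r * L * M * t\<^sup>2
    \<le> (phi t x - t *\<^sub>R b) \<bullet> x"
proof -
  define E where "E = phi t x - x - t *\<^sub>R V x"
  have "norm x < r"
    using x by simp
  have "(phi t x - t *\<^sub>R b) \<bullet> x = (norm x)\<^sup>2 + t * (x \<bullet> (V x - b)) + E \<bullet> x"
    unfolding E_def by (simp add: power2_norm_eq_inner inner_diff_left inner_commute algebra_simps)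
  moreover have "\<bar>t * (x \<bullet> (V x - b))\<bar> \<le> (M + norm b + r * L) * (r - norm x)"
  proof -
    have "t * \<bar>x \<bullet> (V x - b)\<bar> \<le> 1 * ((M + norm b + r * L) * (r - norm x))"
      using radial_defect_le[of x] \<open>norm x < r\<close> t M_nonneg L_nonneg r_pos by (intro mult_mono) auto
    then show ?thesis
      using t by (simp add: abs_mult)
  qed
  moreover have "\<bar>E \<bullet> x\<bar> \<le> r * L * M * t\<^sup>2"
  proof -
    have "\<bar>E \<bullet> x\<bar> \<le> norm E * norm x"
      by (rule Cauchy_Schwarz_ineq2)
    also have "\<dots> \<le> (L * M * t\<^sup>2) * r"
      unfolding E_def using flow_taylor_le[OF x t(1)] \<open>norm x < r\<close> L_nonneg M_nonneg
      by (intro mult_mono) auto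
    finally show ?thesis
      by (simp add: algebra_simps)
  qed
  ultimately show ?thesis
    by (simp add: abs_le_iff)
qed

lemma ball_subset_flow_image:
  assumes t: "0 < t" "t \<le> T" "t \<le> 1" "t\<^sup>2 < r"
  shows "ball (t *\<^sub>R b) (r - t\<^sup>2 - (M + norm b + r * L + r * L * M) * t\<^sup>2 / (r - t\<^sup>2))
    \<subseteq> phi t ` ball 0 r"
proof -
  define \<rho> where "\<rho> = r - t\<^sup>2"
  define D where "D = M + norm b + r * L + r * L * M"
  have "0 < \<rho>"
    unfolding \<rho>_def using t by simp
  have "cball 0 \<rho> \<subseteq> ball (0::'a) r"
    unfolding \<rho>_def using t by (simp add: cball_subset_ball_iff)
  have "t \<in> {0..T}"
    using t by simp
  have "ball (t *\<^sub>R b) (\<rho> - D * t\<^sup>2 / \<rho>) \<subseteq> phi t ` cball 0 \<rho>"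
  proof (rule ball_subset_image_if_outward[OF \<open>0 < \<rho>\<close>])
    show "continuous_on (cball 0 \<rho>) (phi t)"
      using lipschitz_on_continuous_on[OF lipschitz_on_flow[OF \<open>t \<in> {0..T}\<close>]] \<open>cball 0 \<rho> \<subseteq> ball 0 r\<close>
      by (rule continuous_on_subset)
    show "(\<rho> - D * t\<^sup>2 / \<rho>) * \<rho> \<le> (phi t y - t *\<^sub>R b) \<bullet> y" if "y \<in> sphere 0 \<rho>" for y
    proof -
      have "y \<in> ball 0 r" "norm y = \<rho>"
        using that \<open>cball 0 \<rho> \<subseteq> ball 0 r\<close> by auto
      then have "\<rho>\<^sup>2 - (M + norm b + r * L) * t\<^sup>2 - r * L * M * t\<^sup>2 \<le> (phi t y - t *\<^sub>R b) \<bullet> y"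
        using inner_flow_minus_translation_ge[of y t] \<open>t \<in> {0..T}\<close> t unfolding \<rho>_def by simp
      moreover have "(\<rho> - D * t\<^sup>2 / \<rho>) * \<rho> = \<rho>\<^sup>2 - D * t\<^sup>2"
        using \<open>0 < \<rho>\<close> by (simp add: power2_eq_square field_simps)
      ultimately show ?thesis
        unfolding D_def by (simp add: algebra_simps)
    qed
  qed
  then show ?thesis
    using \<open>cball 0 \<rho> \<subseteq> ball 0 r\<close> unfolding \<rho>_def D_def by blast
qed

lemma eventually_flow_image_subset_cball:
  obtains C where "\<forall>\<^sub>F t in at_right 0. phi t ` ball 0 r \<subseteq> cball (t *\<^sub>R b) (r + C * t\<^sup>2)"
proof
  define \<Lambda> where "\<Lambda> = M + norm b + r * L"
  have "0 \<le> \<Lambda>"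
    unfolding \<Lambda>_def using M_nonneg L_nonneg r_pos by simp
  have "phi t ` ball 0 r
      \<subseteq> cball (t *\<^sub>R b) (r + (2 * r * L * M + (M + norm b + L * M)\<^sup>2) / (2 * r) * t\<^sup>2)"
    if "t \<in> {0<..<min T (min 1 (r / (2 * \<Lambda> + 1)))}" for t
  proof -
    have "t * (2 * \<Lambda> + 1) < r"
      using that \<open>0 \<le> \<Lambda>\<close> by (simp add: less_divide_eq)
    then have "2 * t * \<Lambda> \<le> r"
      using that by (simp add: algebra_simps)
    then show ?thesis
      using norm_flow_minus_translation_le[of _ t] that unfolding \<Lambda>_def
      by (auto simp: dist_norm norm_minus_commute)
  qed
  moreover have "0 < min T (min 1 (r / (2 * \<Lambda> + 1)))"
    using T_pos r_pos \<open>0 \<le> \<Lambda>\<close> by simp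
  ultimately show "\<forall>\<^sub>F t in at_right 0.
      phi t ` ball 0 r
      \<subseteq> cball (t *\<^sub>R b) (r + (2 * r * L * M + (M + norm b + L * M)\<^sup>2) / (2 * r) * t\<^sup>2)"
    by (rule eventually_at_rightI)
qed

lemma eventually_ball_subset_flow_image:
  obtains C where "\<forall>\<^sub>F t in at_right 0. ball (t *\<^sub>R b) (r - C * t\<^sup>2) \<subseteq> phi t ` ball 0 r"
proof
  define D where "D = M + norm b + r * L + r * L * M"
  have "0 \<le> D"
    unfolding D_def using M_nonneg L_nonneg r_pos by simp
  have "ball (t *\<^sub>R b) (r - (1 + 2 * D / r) * t\<^sup>2) \<subseteq> phi t ` ball 0 r"
    if "t \<in> {0<..<min T (min 1 (r / 2))}" for t
  proof -
    have "t\<^sup>2 \<le> t"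
      using that by (simp add: power2_eq_square mult_left_le_one_le)
    then have "t\<^sup>2 \<le> r / 2"
      using that by simp
    then have "D * t\<^sup>2 / (r - t\<^sup>2) \<le> D * t\<^sup>2 / (r / 2)"
      using r_pos \<open>0 \<le> D\<close> by (intro divide_left_mono) auto
    then have "r - (1 + 2 * D / r) * t\<^sup>2 \<le> r - t\<^sup>2 - D * t\<^sup>2 / (r - t\<^sup>2)"
      using r_pos by (simp add: field_simps)
    then have "ball (t *\<^sub>R b) (r - (1 + 2 * D / r) * t\<^sup>2)
        \<subseteq> ball (t *\<^sub>R b) (r - t\<^sup>2 - D * t\<^sup>2 / (r - t\<^sup>2))"
      by (rule subset_ball)
    also have "\<dots> \<subseteq> phi t ` ball 0 r"
      unfolding D_def using ball_subset_flow_image[of t] that \<open>t\<^sup>2 \<le> r / 2\<close> r_pos by simp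
    finally show ?thesis .
  qed
  moreover have "0 < min T (min 1 (r / 2))"
    using T_pos r_pos by simp
  ultimately show "\<forall>\<^sub>F t in at_right 0.
      ball (t *\<^sub>R b) (r - (1 + 2 * D / r) * t\<^sup>2) \<subseteq> phi t ` ball 0 r"
    by (rule eventually_at_rightI)
qed

lemma radial_vector_eq_0:
  assumes "\<forall>\<^sub>F t in at_right 0. center_of_mass (phi t ` ball 0 r) = 0"
  shows "b = 0"
proof -
  obtain C1 where outer: "\<forall>\<^sub>F t in at_right 0. phi t ` ball 0 r \<subseteq> cball (t *\<^sub>R b) (r + C1 * t\<^sup>2)"
    using eventually_flow_image_subset_cball .
  obtain C2 where inner: "\<forall>\<^sub>F t in at_right 0. ball (t *\<^sub>R b) (r - C2 * t\<^sup>2) \<subseteq> phi t ` ball 0 r"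
    using eventually_ball_subset_flow_image .
  have "((\<lambda>t. r - C2 * t\<^sup>2) \<longlongrightarrow> r) (at_right 0)"
    by (auto intro!: tendsto_eq_intros)
  then have "\<forall>\<^sub>F t in at_right 0. 0 < r - C2 * t\<^sup>2"
    using r_pos by (rule order_tendstoD(1))
  moreover have "\<forall>\<^sub>F t in at_right 0. t \<in> {0<..<T}"
    using T_pos by (intro eventually_at_rightI) auto
  ultimately have "\<forall>\<^sub>F t in at_right 0. norm b \<le> real DIM('a) * (C1 + C2) * t"
    using inner outer assms
  proof eventually_elim
    case (elim t)
    then have "t \<in> {0..T}"
      by simp
    have "phi t ` ball 0 r \<in> sets lebesgue"
      using lipschitz_on_continuous_on[OF lipschitz_on_flow[OF \<open>t \<in> {0..T}\<close>]]
      by (intro continuous_image_open_in_sets_lebesgue) auto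
    then have "norm (0 - t *\<^sub>R b) \<le> real DIM('a) * ((r + C1 * t\<^sup>2) - (r - C2 * t\<^sup>2))"
      using center_of_mass_between_balls[of "phi t ` ball 0 r" "t *\<^sub>R b" "r - C2 * t\<^sup>2" "r + C1 * t\<^sup>2"] elim
      by simp
    then have "t * norm b \<le> t * (real DIM('a) * (C1 + C2) * t)"
      using elim by (simp add: power2_eq_square algebra_simps)
    then show ?case
      using elim by simp
  qed
  moreover have "((\<lambda>t. real DIM('a) * (C1 + C2) * t) \<longlongrightarrow> 0) (at_right 0)"
    by (auto intro!: tendsto_eq_intros)
  ultimately have "norm b \<le> 0"
    by (intro tendsto_lowerbound[of "\<lambda>t. real DIM('a) * (C1 + C2) * t"]) auto
  then show ?thesis
    by simp
qed

end

lemma C1_field_radial_linear_flow: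
  fixes V :: "'a::euclidean_space \<Rightarrow> 'a"
  assumes "C1_field V" "0 < r" "0 < e" "is_flow_on V e (ball 0 r) phi"
    and "\<And>x. x \<in> sphere 0 r \<Longrightarrow> V x \<bullet> x = b \<bullet> x"
  obtains M L T where "radial_linear_flow V phi r e M L T b"
proof -
  obtain M where M: "\<And>z. z \<in> cball 0 (r + 1) \<Longrightarrow> norm (V z) \<le> M"
    using compact_continuous_image[OF C1_field_continuous_on[OF assms(1)] compact_cball]
    by (meson compact_imp_bounded bounded_iff image_eqI)
  obtain L where L: "L-lipschitz_on (cball 0 (r + 1)) V"
    using C1_field_lipschitz_on[OF assms(1) compact_cball convex_cball] .
  have "\<forall>\<^sub>F T in at_right 0. M * T < 1"
    by (rule order_tendstoD(2)) (auto intro!: tendsto_eq_intros)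
  moreover have "\<forall>\<^sub>F T in at_right 0. L * T < 1 / 2"
    by (rule order_tendstoD(2)) (auto intro!: tendsto_eq_intros)
  moreover have "\<forall>\<^sub>F T in at_right 0. T \<in> {0<..<e}"
    using \<open>0 < e\<close> by (intro eventually_at_rightI) auto
  ultimately have "\<forall>\<^sub>F T in at_right 0. 0 < T \<and> T < e \<and> M * T < 1 \<and> L * T \<le> 1 / 2"
    by eventually_elim auto
  then obtain T where "0 < T" "T < e" "M * T < 1" "L * T \<le> 1 / 2"
    using eventually_happens'[OF trivial_limit_at_right_real] by blast
  then show thesis
    using that[of M L T] M L assms
    by (simp add: radial_linear_flow_def radial_linear_flow_axioms_def short_time_flow_def)
qed

theorem lemma2:
  fixes V :: "'a::euclidean_space \<Rightarrow> 'a" and c :: 'a and r :: real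
    and phi :: "real \<Rightarrow> 'a \<Rightarrow> 'a" and e :: real
  assumes "DIM('a) \<ge> 2"
    and "r > 0"
    and "C1_field V"
    and "e > 0"
    and "is_flow_on V e (ball c r) phi"
    and "\<forall>t\<in>{-e<..<e}. center_of_mass (phi t ` ball c r) = 0"
    and "\<exists>b::'a. \<forall>x\<in>sphere c r. V x \<bullet> x = b \<bullet> x"
  shows "\<forall>x\<in>sphere c r. V x \<bullet> x = 0"
proof -
  \<comment> \<open>The argument works in every dimension.\<close>
  have "phi 0 ` ball c r = ball c r"
    using assms(5) unfolding is_flow_on_def by force
  moreover have "center_of_mass (phi 0 ` ball c r) = 0"
    using assms(4,6) by simp
  ultimately have "c = 0"
    using center_of_mass_ball[OF assms(2), of c] by simp
  obtain b where b: "\<And>x. x \<in> sphere 0 r \<Longrightarrow> V x \<bullet> x = b \<bullet> x"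
    using assms(7) \<open>c = 0\<close> by blast
  then obtain M L T where "radial_linear_flow V phi r e M L T b"
    using C1_field_radial_linear_flow assms(2-5) \<open>c = 0\<close> by metis
  moreover have "\<forall>\<^sub>F t in at_right 0. center_of_mass (phi t ` ball 0 r) = 0"
    using assms(4,6) \<open>c = 0\<close> by (intro eventually_at_rightI[of 0 e]) auto
  ultimately have "b = 0"
    by (rule radial_linear_flow.radial_vector_eq_0)
  then show ?thesis
    using b \<open>c = 0\<close> by simp
qed

end
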